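(* Let $n\geq 4$ and let $X_n$ be the rack of transpositions of $\mathbb{S}_n$. Let $-1$ denote the constant rack $2$-cocycle on $X_n$ with value $-1$, and let $\chi:X_n\times X_n\to\mathbb{C}^\times$ be given, for $\sigma\in X_n$ and $\tau=(i\;j)\in X_n$ with $i<j$, by $\chi(\sigma,\tau)=1$ if $\sigma(i)<\sigma(j)$ and $\chi(\sigma,\tau)=-1$ if $\sigma(i)>\sigma(j)$. Then the rack $2$-cocycles $\chi$ and $-1$ on $X_n$ are equivalent by twist. Consequently, the Nichols algebras $\mathfrak{B}(X_n,-1)$ and $\mathfrak{B}(X_n,\chi)$ have the same Hilbert series.
   Context: A rack is a non-empty set $X$ with a map $\triangleright:X\times X\to X$ such that $y\mapsto x\triangleright y$ is bijective for all $x$ and $x\triangleright(y\triangleright z)=(x\triangleright y)\triangleright(x\triangleright z)$. $X_n$ is the set of transpositions in $\mathbb{S}_n$ with $x\triangleright y=xyx^{-1}$. A rack $2$-cocycle is a map $q:X\times X\to\mathbb{C}^\times$ with $q_{x,y\triangleright z}q_{y,z}=q_{x\triangleright y,x\triangleright z}q_{x,z}$ for all $x,y,z$. For a map $\phi:X\times X\to\mathbb{C}^\times$ define $q^\phi_{x,y}=\phi(x,y)\phi(x\triangleright y,x)^{-1}q_{x,y}$. Two rack $2$-cocycles $q,q'$ on $X$ are equivalent by twist if there exists $\phi:X\times X\to\mathbb{C}^\times$ with $q'=q^\phi$. Given a rack $2$-cocycle $q$ on a finite rack $X$, let $V=\mathbb{C}X$ with basis $X$ and braiding $c(x\otimes y)=q_{x,y}\,(x\triangleright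 y)\otimes x$; this induces a representation $\rho_m$ of the braid group $\mathbb{B}_m$ on $V^{\otimes m}$ with $\rho_m(\sigma_i)=\mathrm{id}^{\otimes(i-1)}\otimes c\otimes\mathrm{id}^{\otimes(m-i-1)}$. Let $\mu:\mathbb{S}_m\to\mathbb{B}_m$ be the Matsumoto section ($\mu((i\;i+1))=\sigma_i$, $\mu(xy)=\mu(x)\mu(y)$ when lengths add), and $Q_m=\sum_{\sigma\in\mathbb{S}_m}\rho_m(\mu(\sigma))$ for $m\ge2$. The Nichols algebra is $\mathfrak{B}(X,q)=T(V)/\bigoplus_{m\ge2}\ker Q_m$, graded by tensor degree; its Hilbert series is $\sum_{m\ge0}\dim\mathfrak{B}^m(X,q)\,t^m$. *)

theory Defs
  imports Complex_Main "HOL-Library.Function_Algebras" "HOL-Combinatorics.Transposition"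
    "HOL-Combinatorics.Permutations" "HOL-Computational_Algebra.Formal_Power_Series"
begin

text \<open>Permutations of {1..n} are represented as functions nat => nat (identity outside {1..n}).\<close>

definition rack_op :: "(nat \<Rightarrow> nat) \<Rightarrow> (nat \<Rightarrow> nat) \<Rightarrow> (nat \<Rightarrow> nat)" where
  "rack_op x y = x \<circ> y \<circ> inv x"

definition Xn :: "nat \<Rightarrow> (nat \<Rightarrow> nat) set" where
  "Xn n = {transpose i j | i j. 1 \<le> i \<and> i < j \<and> j \<le> n}"

definition rack_2cocycle :: "'a set \<Rightarrow> ('a \<Rightarrow> 'a \<Rightarrow> 'a) \<Rightarrow> ('a \<Rightarrow> 'a \<Rightarrow> complex) \<Rightarrow> bool" where
  "rack_2cocycle X r q \<longleftrightarrow>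
     (\<forall>x\<in>X. \<forall>y\<in>X. q x y \<noteq> 0) \<and>
     (\<forall>x\<in>X. \<forall>y\<in>X. \<forall>z\<in>X. q x (r y z) * q y z = q (r x y) (r x z) * q x z)"

definition twist :: "('a \<Rightarrow> 'a \<Rightarrow> 'a) \<Rightarrow> ('a \<Rightarrow> 'a \<Rightarrow> complex) \<Rightarrow> ('a \<Rightarrow> 'a \<Rightarrow> complex)
    \<Rightarrow> ('a \<Rightarrow> 'a \<Rightarrow> complex)" where
  "twist r q \<phi> x y = \<phi> x y * inverse (\<phi> (r x y) x) * q x y"

definition equiv_by_twist :: "'a set \<Rightarrow> ('a \<Rightarrow> 'a \<Rightarrow> 'a) \<Rightarrow> ('a \<Rightarrow> 'a \<Rightarrow> complex)
    \<Rightarrow> ('a \<Rightarrow> 'a \<Rightarrow> complex) \<Rightarrow> bool" where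
  "equiv_by_twist X r q q' \<longleftrightarrow>
     (\<exists>\<phi>. (\<forall>x\<in>X. \<forall>y\<in>X. \<phi> x y \<noteq> 0) \<and> (\<forall>x\<in>X. \<forall>y\<in>X. q' x y = twist r q \<phi> x y))"

definition chi :: "(nat \<Rightarrow> nat) \<Rightarrow> (nat \<Rightarrow> nat) \<Rightarrow> complex" where
  "chi \<sigma> \<tau> = (if \<exists>i j. i < j \<and> \<tau> = transpose i j \<and> \<sigma> i > \<sigma> j then -1 else 1)"

text \<open>V^{\<otimes> m} has basis the words of length m over X; vectors are functions
  from words to complex numbers supported on these words.\<close>

definition words :: "'a set \<Rightarrow> nat \<Rightarrow> 'a list set" where
  "words X m = {w. length w = m \<and> set w \<subseteq> X}"

definition tensor_space :: "'a set \<Rightarrow> nat \<Rightarrow> ('a list \<Rightarrow> complex) set" where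
  "tensor_space X m = {f. \<forall>w. w \<notin> words X m \<longrightarrow> f w = 0}"

text \<open>rho_m(sigma_i), 1 <= i < m, acting on positions i, i+1 (1-indexed), as a linear map:
  basis word w goes to q(x,y) * w' where x, y are the letters at positions i, i+1 and
  w' has (x |> y, x) there.\<close>
definition braid_gen :: "'a set \<Rightarrow> ('a \<Rightarrow> 'a \<Rightarrow> 'a) \<Rightarrow> ('a \<Rightarrow> 'a \<Rightarrow> complex) \<Rightarrow> nat \<Rightarrow> nat
    \<Rightarrow> ('a list \<Rightarrow> complex) \<Rightarrow> ('a list \<Rightarrow> complex)" where
  "braid_gen X r q m i f = (\<lambda>v. \<Sum>w\<in>words X m.
      (if v = w[i - 1 := r (w ! (i - 1)) (w ! i), i := w ! (i - 1)]
       then q (w ! (i - 1)) (w ! i) * f w else 0))"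

definition rho_word :: "'a set \<Rightarrow> ('a \<Rightarrow> 'a \<Rightarrow> 'a) \<Rightarrow> ('a \<Rightarrow> 'a \<Rightarrow> complex) \<Rightarrow> nat \<Rightarrow> nat list
    \<Rightarrow> ('a list \<Rightarrow> complex) \<Rightarrow> ('a list \<Rightarrow> complex)" where
  "rho_word X r q m ws = foldr (\<lambda>i g. braid_gen X r q m i \<circ> g) ws id"

definition perm_word :: "nat list \<Rightarrow> (nat \<Rightarrow> nat)" where
  "perm_word ws = foldr (\<lambda>i p. transpose i (Suc i) \<circ> p) ws id"

definition reduced_word :: "nat \<Rightarrow> (nat \<Rightarrow> nat) \<Rightarrow> nat list" where
  "reduced_word m \<sigma> = (SOME ws. set ws \<subseteq> {1..<m} \<and> perm_word ws = \<sigma> \<and>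
      (\<forall>vs. set vs \<subseteq> {1..<m} \<and> perm_word vs = \<sigma> \<longrightarrow> length ws \<le> length vs))"

definition Q_op :: "'a set \<Rightarrow> ('a \<Rightarrow> 'a \<Rightarrow> 'a) \<Rightarrow> ('a \<Rightarrow> 'a \<Rightarrow> complex) \<Rightarrow> nat
    \<Rightarrow> ('a list \<Rightarrow> complex) \<Rightarrow> ('a list \<Rightarrow> complex)" where
  "Q_op X r q m f = (\<lambda>w. \<Sum>\<sigma>\<in>{\<sigma>. \<sigma> permutes {1..m}}. rho_word X r q m (reduced_word m \<sigma>) f w)"

text \<open>dim B^m(X,q) = dim T^m / ker Q_m = dim of the image of Q_m on T^m
  (for m < 2, Q_m is the identity, so B^m = T^m).\<close>
definition nichols_dim :: "'a set \<Rightarrow> ('a \<Rightarrow> 'a \<Rightarrow> 'a) \<Rightarrow> ('a \<Rightarrow> 'a \<Rightarrow> complex) \<Rightarrow> nat \<Rightarrow> nat" where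
  "nichols_dim X r q m =
     vector_space.dim (\<lambda>(c::complex) f w. c * f w) (Q_op X r q m ` tensor_space X m)"

definition hilbert_series :: "'a set \<Rightarrow> ('a \<Rightarrow> 'a \<Rightarrow> 'a) \<Rightarrow> ('a \<Rightarrow> 'a \<Rightarrow> complex) \<Rightarrow> nat fps" where
  "hilbert_series X r q = Abs_fps (nichols_dim X r q)"

end

theory Submission
  imports Defs
begin

(* In the Clifford algebra generated by anticommuting e_1, e_2, ... with e_k^2 = 1, send a
   transposition (a b), a < b, to u_(a b) = e_a - e_b.  Then u_x^2 = 2 and
   u_(x \<triangleright> y) u_x = -\<chi>(x, y) u_x u_y.  Hence for every word w over X_n the product u_w is nonzero,
   and a nonzero coordinate d(w) of it changes by the factor -\<chi> under each Hurwitz move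
   (x, y) \<mapsto> (x \<triangleright> y, x).  Multiplying the basis word w of V^{\<otimes>m} by d(w) is therefore a diagonal
   change of basis turning the braid group representation for the cocycle -1 into the one for \<chi>;
   it maps the image of Q_m for -1 onto the image of Q_m for \<chi>, so the graded dimensions agree,
   and restricted to words of length two it gives the twist. *)

section \<open>Diagonal changes of basis of the tensor powers\<close>

definition braid_move :: "('a \<Rightarrow> 'a \<Rightarrow> 'a) \<Rightarrow> nat \<Rightarrow> 'a list \<Rightarrow> 'a list" where
  "braid_move r k w = w[k := r (w ! k) (w ! Suc k), Suc k := w ! k]"

text \<open>Pointwise multiplication by \<open>d\<close> is a diagonal change of basis of every tensor power
  that conjugates \<open>\<rho>_m\<close> for \<open>q\<close> into \<open>\<rho>_m\<close> for \<open>q'\<close>.\<close>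
definition rescales_braiding :: "'a set \<Rightarrow> ('a \<Rightarrow> 'a \<Rightarrow> 'a) \<Rightarrow> ('a \<Rightarrow> 'a \<Rightarrow> complex)
    \<Rightarrow> ('a \<Rightarrow> 'a \<Rightarrow> complex) \<Rightarrow> ('a list \<Rightarrow> complex) \<Rightarrow> bool" where
  "rescales_braiding X r q q' d \<longleftrightarrow> (\<forall>w. d w \<noteq> 0) \<and>
     (\<forall>w k. set w \<subseteq> X \<longrightarrow> Suc k < length w \<longrightarrow>
        q' (w ! k) (w ! Suc k) * d w = q (w ! k) (w ! Suc k) * d (braid_move r k w))"

lemma rescales_braiding_equiv_by_twist:
  assumes "rescales_braiding X r q q' d"
  shows "equiv_by_twist X r q q'"
  unfolding equiv_by_twist_def
proof (intro exI[of _ "\<lambda>x y. inverse (d [x, y])"] conjI ballI)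
  fix x y assume "x \<in> X" "y \<in> X"
  then have "q' x y * d [x, y] = q x y * d [r x y, x]"
    using assms by (auto simp: rescales_braiding_def braid_move_def dest!: spec[of _ "[x, y]"])
  moreover have "d [x, y] \<noteq> 0"
    using assms by (simp add: rescales_braiding_def)
  ultimately show "q' x y = twist r q (\<lambda>x y. inverse (d [x, y])) x y"
    by (simp add: twist_def field_simps)
qed (use assms in \<open>simp add: rescales_braiding_def\<close>)

lemma braid_gen_rescale:
  assumes "rescales_braiding X r q q' d" and "Suc k < m"
  shows "braid_gen X r q' m (Suc k) (d * f) = d * braid_gen X r q m (Suc k) f"
proof
  fix v
  have "braid_gen X r q' m (Suc k) (d * f) v =
      (\<Sum>w\<in>words X m. if v = braid_move r k w then q' (w ! k) (w ! Suc k) * (d w * f w) else 0)"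
    unfolding braid_gen_def braid_move_def diff_Suc_1 times_fun_apply by (rule refl)
  also have "\<dots> = (\<Sum>w\<in>words X m. d v * (if v = braid_move r k w then q (w ! k) (w ! Suc k) * f w else 0))"
  proof (rule sum.cong[OF refl])
    fix w assume "w \<in> words X m"
    then have "q' (w ! k) (w ! Suc k) * d w = q (w ! k) (w ! Suc k) * d (braid_move r k w)"
      using assms by (auto simp: rescales_braiding_def words_def)
    then show "(if v = braid_move r k w then q' (w ! k) (w ! Suc k) * (d w * f w) else 0) =
        d v * (if v = braid_move r k w then q (w ! k) (w ! Suc k) * f w else 0)"
      by (simp add: ac_simps)
  qed
  also have "\<dots> = (d * braid_gen X r q m (Suc k) f) v"
    unfolding braid_gen_def braid_move_def diff_Suc_1 by (simp add: sum_distrib_left)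
  finally show "braid_gen X r q' m (Suc k) (d * f) v = (d * braid_gen X r q m (Suc k) f) v" .
qed

lemma rho_word_rescale:
  assumes "rescales_braiding X r q q' d" and "set ws \<subseteq> {1..<m}"
  shows "rho_word X r q' m ws (d * f) = d * rho_word X r q m ws f"
  using assms(2)
proof (induction ws)
  case Nil
  then show ?case by (simp add: rho_word_def)
next
  case (Cons i ws)
  then obtain k where "i = Suc k" "Suc k < m"
    by (cases i) auto
  with Cons braid_gen_rescale[OF assms(1)] show ?case
    by (simp add: rho_word_def del: times_fun_apply)
qed

text \<open>Since \<open>reduced_word\<close> is defined by choice, even the fact that its letters lie in
  \<open>{1..<m}\<close> needs the existence of some word for every permutation.\<close>

lemma perm_word_append: "perm_word (xs @ ys) = perm_word xs \<circ> perm_word ys"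
  by (induction xs) (simp_all add: perm_word_def comp_assoc)

lemma transpose_has_perm_word:
  assumes "1 \<le> a" "a < b" "b \<le> m"
  shows "\<exists>ws. set ws \<subseteq> {1..<m} \<and> perm_word ws = transpose a b"
  using assms
proof (induction "b - a" arbitrary: a)
  case 0
  then show ?case by simp
next
  case (Suc d)
  show ?case
  proof (cases "b = Suc a")
    case True
    with Suc.prems show ?thesis
      by (intro exI[of _ "[a]"]) (simp add: perm_word_def)
  next
    case False
    have "Suc a < b" "d = b - Suc a"
      using Suc.hyps(2) Suc.prems False by simp_all
    then obtain ws where ws: "set ws \<subseteq> {1..<m}" "perm_word ws = transpose (Suc a) b"
      using Suc.hyps(1) Suc.prems by auto
    have "perm_word ([a] @ ws @ [a]) = transpose a (Suc a) \<circ> transpose (Suc a) b \<circ> transpose a (Suc a)"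
      by (simp only: perm_word_append ws(2)) (simp add: perm_word_def comp_assoc)
    also have "\<dots> = transpose a b"
      using False Suc.prems by (intro transpose_comp_triple) auto
    finally show ?thesis
      using ws(1) Suc.prems by (intro exI[of _ "[a] @ ws @ [a]"]) auto
  qed
qed

lemma permutes_has_perm_word:
  assumes "\<sigma> permutes {1..m}"
  shows "\<exists>ws. set ws \<subseteq> {1..<m} \<and> perm_word ws = \<sigma>"
  using assms finite_atLeastAtMost
proof (induction rule: permutes_induct)
  case id
  show ?case
    by (intro exI[of _ "[]"]) (simp add: perm_word_def)
next
  case (swap a b p)
  then obtain ws where ws: "set ws \<subseteq> {1..<m}" "perm_word ws = p"
    by auto
  obtain vs where vs: "set vs \<subseteq> {1..<m}" "perm_word vs = transpose a b"
    using swap.hyps transpose_has_perm_word[of "min a b" "max a b" m]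
    by (cases "a < b") (auto simp: transpose_commute)
  show ?case
    using ws vs by (intro exI[of _ "vs @ ws"]) (simp add: perm_word_append)
qed

lemma reduced_word_subset:
  assumes "\<sigma> permutes {1..m}"
  shows "set (reduced_word m \<sigma>) \<subseteq> {1..<m}"
proof -
  let ?P = "\<lambda>ws. set ws \<subseteq> {1..<m} \<and> perm_word ws = \<sigma>"
  obtain ws0 where "?P ws0"
    using permutes_has_perm_word[OF assms] by blast
  then obtain ws where ws: "?P ws" "\<forall>vs. ?P vs \<longrightarrow> length ws \<le> length vs"
    using ex_has_least_nat[of ?P ws0 length] by blast
  show ?thesis
    unfolding reduced_word_def
  proof (rule someI2)
    show "set ws \<subseteq> {1..<m} \<and> perm_word ws = \<sigma> \<and>
        (\<forall>vs. set vs \<subseteq> {1..<m} \<and> perm_word vs = \<sigma> \<longrightarrow> length ws \<le> length vs)"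
      using ws by blast
  qed blast
qed

lemma Q_op_rescale:
  assumes "rescales_braiding X r q q' d"
  shows "Q_op X r q' m (d * f) = d * Q_op X r q m f"
  using rho_word_rescale[OF assms reduced_word_subset]
  by (simp add: Q_op_def fun_eq_iff sum_distrib_left)

lemma vector_space_fun: "vector_space (\<lambda>(c::complex) (f::'a \<Rightarrow> complex) w. c * f w)"
  by unfold_locales (auto simp: fun_eq_iff algebra_simps)

lemma dim_image_inj_linear:
  fixes F :: "('a \<Rightarrow> complex) \<Rightarrow> ('b \<Rightarrow> complex)"
  assumes "Vector_Spaces.linear (\<lambda>c f w. c * f w) (\<lambda>c f w. c * f w) F" and "inj F"
  shows "vector_space.dim (\<lambda>c f w. c * f w) (F ` S) = vector_space.dim (\<lambda>c f w. c * f w) S"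
proof -
  interpret vs1: vector_space "\<lambda>(c::complex) (f::'a \<Rightarrow> complex) w. c * f w"
    by (rule vector_space_fun)
  interpret vs2: vector_space "\<lambda>(c::complex) (f::'b \<Rightarrow> complex) w. c * f w"
    by (rule vector_space_fun)
  interpret F: Vector_Spaces.linear "\<lambda>(c::complex) f w. c * f w" "\<lambda>(c::complex) f w. c * f w" F
    by (rule assms(1))
  obtain B where B: "B \<subseteq> S" "vs1.independent B" "S \<subseteq> vs1.span B" "card B = vs1.dim S"
    using vs1.basis_exists[of S] by auto
  have "vs1.span S = vs1.span B"
    using B vs1.span_mono[of B S] vs1.span_mono[of S "vs1.span B"] vs1.span_span[of B] by auto
  then have "vs2.dim (F ` S) = vs2.dim (F ` B)"
    by (metis F.span_image vs2.dim_span)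
  also have "\<dots> = card (F ` B)"
    using B(2) assms(2) F.dependent_inj_imageD[of B] by (auto intro: vs2.dim_eq_card_independent inj_on_subset)
  also have "\<dots> = vs1.dim S"
    using B(4) assms(2) by (simp add: card_image inj_on_subset)
  finally show ?thesis .
qed

lemma nichols_dim_rescale:
  assumes "rescales_braiding X r q q' d"
  shows "nichols_dim X r q m = nichols_dim X r q' m"
proof -
  have d: "d w \<noteq> 0" for w
    using assms by (simp add: rescales_braiding_def)
  have "(*) d ` tensor_space X m = tensor_space X m"
  proof (intro equalityI subsetI)
    fix g assume "g \<in> tensor_space X m"
    then have "(\<lambda>w. g w / d w) \<in> tensor_space X m" and "g = d * (\<lambda>w. g w / d w)"
      using d by (auto simp: tensor_space_def fun_eq_iff)
    then show "g \<in> (*) d ` tensor_space X m"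
      by blast
  qed (auto simp: tensor_space_def)
  then have "Q_op X r q' m ` tensor_space X m = (*) d ` Q_op X r q m ` tensor_space X m"
    by (metis (no_types, lifting) Q_op_rescale[OF assms] image_cong image_image)
  moreover have "Vector_Spaces.linear (\<lambda>c f w. c * f w) (\<lambda>c f w. c * f w) ((*) d)"
    using vector_space_fun by (auto simp: Vector_Spaces.linear_iff fun_eq_iff algebra_simps)
  moreover have "inj ((*) d)"
    using d by (auto intro!: injI simp: fun_eq_iff)
  ultimately show ?thesis
    unfolding nichols_dim_def by (simp add: dim_image_inj_linear)
qed

lemma hilbert_series_rescale:
  assumes "rescales_braiding X r q q' d"
  shows "hilbert_series X r q = hilbert_series X r q'"
proof -
  have "nichols_dim X r q = nichols_dim X r q'"
    by (intro ext nichols_dim_rescale[OF assms])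
  then show ?thesis
    by (simp add: hilbert_series_def)
qed

section \<open>Transpositions and the cocycle \<open>\<chi>\<close>\<close>

definition transpositions :: "(nat \<Rightarrow> nat) set" where
  "transpositions = {transpose a b | a b. a < b}"

lemma Xn_subset_transpositions: "Xn n \<subseteq> transpositions"
  by (auto simp: Xn_def transpositions_def)

lemma transpose_ordered_eq_iff:
  fixes i j i' j' :: "'a::order"
  assumes "i < j" "i' < j'"
  shows "transpose i j = transpose i' j' \<longleftrightarrow> i = i' \<and> j = j'"
proof
  assume "transpose i j = transpose i' j'"
  then have "transpose i' j' i = j"
    by (metis transpose_apply_first)
  then show "i = i' \<and> j = j'"
    using assms by (auto simp: transpose_eq_iff)
qed simp

lemma transpose_in_transpositions:
  assumes "a \<noteq> b"
  shows "transpose a b \<in> transpositions"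
proof (cases "a < b")
  case True
  then show ?thesis
    by (auto simp: transpositions_def)
next
  case False
  with assms have "b < a"
    by simp
  then show ?thesis
    unfolding transpositions_def transpose_commute[of a b] by blast
qed

lemma rack_op_transpose:
  assumes "bij p"
  shows "rack_op p (transpose i j) = transpose (p i) (p j)"
proof -
  have "transpose (p i) (p j) \<circ> p = p \<circ> transpose i j"
    using transpose_comp_eq[OF assms, of "p i" "p j"] assms by (simp add: bij_is_inj)
  moreover have "p \<circ> inv p = id"
    using assms by (simp add: bij_is_surj flip: surj_iff)
  ultimately show ?thesis
    unfolding rack_op_def by (metis comp_assoc comp_id)
qed

lemma rack_op_transpositions:
  assumes "x \<in> transpositions" "y \<in> transpositions"
  shows "rack_op x y \<in> transpositions"
proof -
  obtain a b i j where "x = transpose a b" "y = transpose i j" "i < j"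
    using assms by (auto simp: transpositions_def)
  moreover have "x i \<noteq> x j"
    using \<open>i < j\<close> \<open>x = transpose a b\<close> by (metis less_irrefl transpose_eq_imp_eq)
  ultimately show ?thesis
    by (simp add: rack_op_transpose transpose_in_transpositions)
qed

lemma chi_transpose:
  assumes "i < j"
  shows "chi \<sigma> (transpose i j) = (if \<sigma> j < \<sigma> i then -1 else 1)"
  using assms by (auto simp: chi_def transpose_ordered_eq_iff)

definition pair_sign :: "nat \<Rightarrow> nat \<Rightarrow> complex" where
  "pair_sign p q = (if p < q then 1 else -1)"

lemma chi_transpose_pair_sign:
  assumes "i \<noteq> j" "\<sigma> i \<noteq> \<sigma> j"
  shows "chi \<sigma> (transpose i j) = pair_sign (\<sigma> i) (\<sigma> j) * pair_sign i j"
proof (cases "i < j")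
  case True
  then show ?thesis
    using assms by (simp add: chi_transpose pair_sign_def)
next
  case False
  then show ?thesis
    using assms by (simp add: chi_transpose pair_sign_def transpose_commute[of i j])
qed

lemma pair_sign_mult_self: "pair_sign p q * pair_sign p q = 1"
  by (simp add: pair_sign_def)

lemma chi_cocycle_identity:
  assumes "bij x" "bij y" "i < j"
  shows "chi x (rack_op y (transpose i j)) * chi y (transpose i j) =
    chi (rack_op x y) (rack_op x (transpose i j)) * chi x (transpose i j)"
proof -
  have inj: "inj x" "inj y"
    using assms by (simp_all add: bij_is_inj)
  then have ne: "y i \<noteq> y j" "x i \<noteq> x j" "x (y i) \<noteq> x (y j)"
    using \<open>i < j\<close> by (auto dest: injD)
  have "rack_op x y (x k) = x (y k)" for k
    using inj by (simp add: rack_op_def)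
  then have "chi x (rack_op y (transpose i j)) * chi y (transpose i j) =
        pair_sign (x (y i)) (x (y j)) * pair_sign i j * (pair_sign (y i) (y j) * pair_sign (y i) (y j))"
    and "chi (rack_op x y) (rack_op x (transpose i j)) * chi x (transpose i j) =
        pair_sign (x (y i)) (x (y j)) * pair_sign i j * (pair_sign (x i) (x j) * pair_sign (x i) (x j))"
    using assms ne by (simp_all add: rack_op_transpose chi_transpose_pair_sign ac_simps)
  then show ?thesis
    by (simp add: pair_sign_mult_self)
qed

lemma rack_2cocycle_chi:
  assumes "X \<subseteq> transpositions"
  shows "rack_2cocycle X rack_op chi"
  unfolding rack_2cocycle_def
proof (intro conjI ballI)
  fix x y z assume "x \<in> X" "y \<in> X" "z \<in> X"
  with assms have "x \<in> transpositions" "y \<in> transpositions" "z \<in> transpositions"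
    by blast+
  then obtain i j where "bij x" "bij y" "i < j" "z = transpose i j"
    by (auto simp: transpositions_def)
  then show "chi x (rack_op y z) * chi y z = chi (rack_op x y) (rack_op x z) * chi x z"
    by (simp add: chi_cocycle_identity)
qed (simp add: chi_def)

section \<open>A Clifford representation of the transpositions\<close>

text \<open>Functions \<open>nat set \<Rightarrow> complex\<close> are elements of the Clifford algebra with basis the
  ordered monomials \<open>e_T\<close>; \<open>clifford_gen k\<close> is left multiplication by \<open>e_k\<close>.\<close>

definition toggle :: "nat \<Rightarrow> nat set \<Rightarrow> nat set" where
  "toggle k T = (if k \<in> T then T - {k} else insert k T)"

definition clifford_sign :: "nat \<Rightarrow> nat set \<Rightarrow> complex" where
  "clifford_sign k T = (-1) ^ card {t \<in> T. t < k}"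

definition clifford_gen :: "nat \<Rightarrow> (nat set \<Rightarrow> complex) \<Rightarrow> (nat set \<Rightarrow> complex)" where
  "clifford_gen k f = (\<lambda>T. clifford_sign k T * f (toggle k T))"

definition scale :: "complex \<Rightarrow> ('a \<Rightarrow> complex) \<Rightarrow> ('a \<Rightarrow> complex)" where
  "scale c f = (\<lambda>T. c * f T)"

lemma toggle_toggle [simp]: "toggle k (toggle k T) = T"
  by (auto simp: toggle_def)

lemma toggle_commute: "toggle k (toggle l T) = toggle l (toggle k T)"
  by (auto simp: toggle_def)

lemma clifford_sign_toggle_le:
  assumes "k \<le> l"
  shows "clifford_sign k (toggle l T) = clifford_sign k T"
proof -
  have "{t \<in> toggle l T. t < k} = {t \<in> T. t < k}"
    using assms by (auto simp: toggle_def)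
  then show ?thesis
    by (simp add: clifford_sign_def)
qed

lemma clifford_sign_toggle_less:
  assumes "k < l"
  shows "clifford_sign l (toggle k T) = - clifford_sign l T"
proof -
  have fin: "finite {t \<in> T. t < l}"
    by (rule finite_subset[of _ "{..<l}"]) auto
  have "{t \<in> toggle k T. t < l} =
      (if k \<in> T then {t \<in> T. t < l} - {k} else insert k {t \<in> T. t < l})"
    using assms by (auto simp: toggle_def)
  moreover have "k \<in> T \<Longrightarrow> card {t \<in> T. t < l} = Suc (card ({t \<in> T. t < l} - {k}))"
    using assms fin by (metis (mono_tags, lifting) card_Suc_Diff1 mem_Collect_eq)
  ultimately show ?thesis
    using fin by (auto simp: clifford_sign_def)
qed

lemma clifford_sign_mult_self: "clifford_sign k T * clifford_sign k T = 1"
  by (simp add: clifford_sign_def flip: power_add)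

lemma clifford_gen_square [simp]: "clifford_gen k (clifford_gen k f) = f"
  by (simp add: clifford_gen_def clifford_sign_toggle_le clifford_sign_mult_self fun_eq_iff
      flip: mult.assoc)

lemma clifford_gen_anticommute:
  assumes "k \<noteq> l"
  shows "clifford_gen k (clifford_gen l f) = - clifford_gen l (clifford_gen k f)"
  using assms
  by (cases "k < l")
     (auto simp: clifford_gen_def clifford_sign_toggle_le clifford_sign_toggle_less
        toggle_commute fun_eq_iff)

lemma clifford_gen_diff [simp]: "clifford_gen k (f - g) = clifford_gen k f - clifford_gen k g"
  by (simp add: clifford_gen_def fun_eq_iff algebra_simps)

lemma clifford_gen_scale [simp]: "clifford_gen k (scale c f) = scale c (clifford_gen k f)"
  by (simp add: clifford_gen_def scale_def fun_eq_iff)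

definition clifford_diff :: "nat \<Rightarrow> nat \<Rightarrow> (nat set \<Rightarrow> complex) \<Rightarrow> (nat set \<Rightarrow> complex)" where
  "clifford_diff a b f = clifford_gen a f - clifford_gen b f"

lemma clifford_diff_swap: "clifford_diff b a f = - clifford_diff a b f"
  by (simp add: clifford_diff_def)

lemma clifford_diff_scale [simp]: "clifford_diff a b (scale c f) = scale c (clifford_diff a b f)"
  by (simp add: clifford_diff_def) (simp add: scale_def fun_eq_iff algebra_simps)

lemma clifford_diff_square:
  assumes "a \<noteq> b"
  shows "clifford_diff a b (clifford_diff a b f) = scale 2 f"
  using clifford_gen_anticommute[OF assms, of f]
  by (simp add: clifford_diff_def scale_def fun_eq_iff)

lemma clifford_diff_gen:
  assumes "a \<noteq> b"
  shows "clifford_diff a b (clifford_gen k f) = - clifford_gen (transpose a b k) (clifford_diff a b f)"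
proof -
  consider "k = a" | "k = b" | "k \<noteq> a" "k \<noteq> b"
    by blast
  then show ?thesis
  proof cases
    case 1
    with assms show ?thesis
      by (simp add: clifford_diff_def)
  next
    case 2
    with assms show ?thesis
      by (simp add: clifford_diff_def)
  next
    case 3
    then show ?thesis
      using clifford_gen_anticommute[of a k f] clifford_gen_anticommute[of b k f]
      by (simp add: clifford_diff_def)
  qed
qed

lemma clifford_diff_conj:
  assumes "a \<noteq> b"
  shows "clifford_diff a b (clifford_diff i j f) =
    - clifford_diff (transpose a b i) (transpose a b j) (clifford_diff a b f)"
proof -
  have "clifford_diff a b (clifford_diff i j f) =
      clifford_diff a b (clifford_gen i f) - clifford_diff a b (clifford_gen j f)"
    by (simp add: clifford_diff_def)
  also have "\<dots> = - clifford_diff (transpose a b i) (transpose a b j) (clifford_diff a b f)"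
    by (simp only: clifford_diff_gen[OF assms])
      (simp add: clifford_diff_def[of "transpose a b i" "transpose a b j"])
  finally show ?thesis .
qed

definition transposition_ends :: "(nat \<Rightarrow> nat) \<Rightarrow> nat \<times> nat" where
  "transposition_ends x = (THE (a, b). a < b \<and> x = transpose a b)"

lemma transposition_ends_transpose:
  assumes "a < b"
  shows "transposition_ends (transpose a b) = (a, b)"
  unfolding transposition_ends_def
  by (rule the_equality) (use assms in \<open>auto simp: transpose_ordered_eq_iff\<close>)

definition clifford_transposition :: "(nat \<Rightarrow> nat) \<Rightarrow> (nat set \<Rightarrow> complex) \<Rightarrow> (nat set \<Rightarrow> complex)" where
  "clifford_transposition x = (case transposition_ends x of (a, b) \<Rightarrow> clifford_diff a b)"

lemma clifford_transposition_transpose: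
  assumes "a \<noteq> b"
  shows "clifford_transposition (transpose a b) f = scale (pair_sign a b) (clifford_diff a b f)"
proof (cases "a < b")
  case True
  then show ?thesis
    by (simp add: clifford_transposition_def transposition_ends_transpose pair_sign_def scale_def)
next
  case False
  with assms have "b < a" by simp
  then show ?thesis
    by (simp add: clifford_transposition_def transposition_ends_transpose pair_sign_def scale_def
        transpose_commute[of a b] clifford_diff_swap[of a b])
qed

lemma clifford_transposition_scale [simp]:
  "clifford_transposition x (scale c f) = scale c (clifford_transposition x f)"
  by (simp add: clifford_transposition_def split: prod.split)

lemma clifford_transposition_square:
  "x \<in> transpositions \<Longrightarrow> clifford_transposition x (clifford_transposition x f) = scale 2 f"
  by (auto simp: transpositions_def clifford_transposition_transpose clifford_diff_square
      pair_sign_def scale_def)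

lemma clifford_transposition_rack_op:
  assumes "x \<in> transpositions" "y \<in> transpositions"
  shows "clifford_transposition (rack_op x y) (clifford_transposition x f) =
    scale (- chi x y) (clifford_transposition x (clifford_transposition y f))"
proof -
  obtain a b i j where x: "x = transpose a b" "a < b" and y: "y = transpose i j" "i < j"
    using assms by (auto simp: transpositions_def)
  have U_x: "clifford_transposition x g = clifford_diff a b g" for g
    using x by (simp add: clifford_transposition_transpose pair_sign_def scale_def)
  have U_y: "clifford_transposition y g = clifford_diff i j g" for g
    using y by (simp add: clifford_transposition_transpose pair_sign_def scale_def)
  have "x i \<noteq> x j"
    using x y by (metis less_irrefl transpose_eq_imp_eq)
  have "pair_sign i j = 1"
    using y by (simp add: pair_sign_def)
  have "rack_op x y = transpose (x i) (x j)"
    using x y by (simp add: rack_op_transpose)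
  then have "clifford_transposition (rack_op x y) (clifford_transposition x f) =
      scale (pair_sign (x i) (x j)) (clifford_diff (x i) (x j) (clifford_diff a b f))"
    using \<open>x i \<noteq> x j\<close> by (simp add: U_x clifford_transposition_transpose)
  also have "\<dots> = scale (- pair_sign (x i) (x j)) (clifford_diff a b (clifford_diff i j f))"
    using clifford_diff_conj[of a b i j f] x by (simp add: scale_def fun_eq_iff)
  also have "\<dots> = scale (- chi x y) (clifford_transposition x (clifford_transposition y f))"
    unfolding U_x U_y using y \<open>x i \<noteq> x j\<close> \<open>pair_sign i j = 1\<close>
    by (simp add: chi_transpose_pair_sign)
  finally show ?thesis .
qed

section \<open>The weight of a word\<close>

definition clifford_word :: "(nat \<Rightarrow> nat) list \<Rightarrow> (nat set \<Rightarrow> complex) \<Rightarrow> (nat set \<Rightarrow> complex)" where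
  "clifford_word w = foldr clifford_transposition w"

lemma clifford_word_Nil [simp]: "clifford_word [] f = f"
  by (simp add: clifford_word_def)

lemma clifford_word_Cons [simp]:
  "clifford_word (x # w) f = clifford_transposition x (clifford_word w f)"
  by (simp add: clifford_word_def)

lemma clifford_word_braid_move:
  assumes "set w \<subseteq> transpositions" "Suc k < length w"
  shows "clifford_word (braid_move rack_op k w) f =
    scale (- chi (w ! k) (w ! Suc k)) (clifford_word w f)"
  using assms
proof (induction w arbitrary: k)
  case Nil
  then show ?case by simp
next
  case (Cons x w)
  show ?case
  proof (cases k)
    case 0
    with Cons.prems obtain y w' where "w = y # w'"
      by (cases w) auto
    with 0 Cons.prems show ?thesis
      by (simp add: braid_move_def clifford_transposition_rack_op)
  next
    case (Suc k')
    with Cons show ?thesis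
      by (simp add: braid_move_def)
  qed
qed

lemma clifford_word_nonzero:
  assumes "set w \<subseteq> transpositions" "f \<noteq> 0"
  shows "clifford_word w f \<noteq> 0"
  using assms
proof (induction w)
  case Nil
  then show ?case by simp
next
  case (Cons x w)
  let ?g = "clifford_word w f"
  have "clifford_transposition x (clifford_transposition x ?g) = scale 2 ?g"
    using Cons.prems by (simp add: clifford_transposition_square)
  moreover have "scale 2 ?g \<noteq> 0"
    using Cons by (auto simp: scale_def fun_eq_iff)
  moreover have "clifford_transposition x 0 = 0"
    using clifford_transposition_scale[of x 0 0] by (simp add: scale_def zero_fun_def)
  ultimately show ?case
    by (metis clifford_word_Cons)
qed

definition support_value :: "('a \<Rightarrow> complex) \<Rightarrow> complex" where
  "support_value g = g (SOME T. g T \<noteq> 0)"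

lemma support_value_nonzero: "g \<noteq> 0 \<Longrightarrow> support_value g \<noteq> 0"
  unfolding support_value_def by (rule someI_ex) (auto simp: fun_eq_iff)

lemma support_value_scale: "c \<noteq> 0 \<Longrightarrow> support_value (scale c g) = c * support_value g"
  by (simp add: support_value_def scale_def)

definition clifford_one :: "nat set \<Rightarrow> complex" where
  "clifford_one T = (if T = {} then 1 else 0)"

lemma clifford_one_nonzero: "clifford_one \<noteq> 0"
  by (auto simp: clifford_one_def fun_eq_iff dest: spec[of _ "{}"])

definition word_weight :: "(nat \<Rightarrow> nat) list \<Rightarrow> complex" where
  "word_weight w = (if set w \<subseteq> transpositions
     then support_value (clifford_word w clifford_one) else 1)"

lemma set_braid_move_transpositions:
  assumes "set w \<subseteq> transpositions" "Suc k < length w"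
  shows "set (braid_move rack_op k w) \<subseteq> transpositions"
proof -
  have "w ! k \<in> transpositions" "w ! Suc k \<in> transpositions"
    using assms nth_mem[of k w] nth_mem[of "Suc k" w] by auto
  then have "rack_op (w ! k) (w ! Suc k) \<in> transpositions"
    by (rule rack_op_transpositions)
  with assms show ?thesis
    by (auto simp: braid_move_def dest!: subsetD[OF set_update_subset_insert])
qed

lemma rescales_braiding_word_weight:
  assumes "X \<subseteq> transpositions"
  shows "rescales_braiding X rack_op (\<lambda>_ _. -1) chi word_weight"
  unfolding rescales_braiding_def
proof (intro conjI allI impI)
  fix w
  show "word_weight w \<noteq> 0"
    by (simp add: word_weight_def support_value_nonzero clifford_word_nonzero clifford_one_nonzero)
next
  fix w k assume "set w \<subseteq> X" "Suc k < length w"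
  moreover have "chi x y \<noteq> 0" for x y
    by (simp add: chi_def)
  ultimately show "chi (w ! k) (w ! Suc k) * word_weight w = -1 * word_weight (braid_move rack_op k w)"
    using assms set_braid_move_transpositions[of w k]
    by (simp add: word_weight_def clifford_word_braid_move support_value_scale)
qed

theorem theorem3p8:
  fixes n :: nat
  assumes "n \<ge> 4"
  shows "rack_2cocycle (Xn n) rack_op chi
       \<and> rack_2cocycle (Xn n) rack_op (\<lambda>_ _. -1)
       \<and> equiv_by_twist (Xn n) rack_op (\<lambda>_ _. -1) chi
       \<and> hilbert_series (Xn n) rack_op (\<lambda>_ _. -1) = hilbert_series (Xn n) rack_op chi"
proof (intro conjI)
  have X: "Xn n \<subseteq> transpositions"
    by (rule Xn_subset_transpositions)
  then have d: "rescales_braiding (Xn n) rack_op (\<lambda>_ _. -1) chi word_weight"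
    by (rule rescales_braiding_word_weight)
  show "rack_2cocycle (Xn n) rack_op chi"
    using X by (rule rack_2cocycle_chi)
  show "rack_2cocycle (Xn n) rack_op (\<lambda>_ _. -1)"
    by (simp add: rack_2cocycle_def)
  show "equiv_by_twist (Xn n) rack_op (\<lambda>_ _. -1) chi"
    using d by (rule rescales_braiding_equiv_by_twist)
  show "hilbert_series (Xn n) rack_op (\<lambda>_ _. -1) = hilbert_series (Xn n) rack_op chi"
    using d by (rule hilbert_series_rescale)
qed

end
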